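(* Let $a\ge 0$ and $b>0$ be constants. Let $\{x^*_{it}\}$ be an optimal solution of the offline problem $$\min_{x}\ \int_0^T\Big(a\sum_{i\in\mathcal I_t}x_{it}+b\Big(\sum_{i\in\mathcal I_t}x_{it}\Big)^2\Big)\,dt$$ subject to $\int_{t_i^{(s)}}^{t_i^{(e)}}x_{it}\,dt\ge D_i$ for $i=1,\dots,N$ and $0\le x_{it}\le U_i$ for $t\in[t_i^{(s)},t_i^{(e)}]$, and let $s^*_t=\sum_{i\in\mathcal I_t}x^*_{it}$. Then $s^*_t$ is (almost everywhere) constant on each time interval between two consecutive event instants. Moreover, there exists an optimal solution in which every $x^*_{it}$ is constant in $t$ on each such time interval. *)

theory Defs
  imports "HOL-Analysis.Analysis"
begin

text \<open>N jobs (EVs) indexed by i < N, with arrival ts i, departure te i,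
  demand D i and rate cap U i.  A schedule is x :: nat \<Rightarrow> real \<Rightarrow> real,
  x i t being the rate of job i at time t (only relevant on [ts i, te i]).\<close>

definition active :: "nat \<Rightarrow> (nat \<Rightarrow> real) \<Rightarrow> (nat \<Rightarrow> real) \<Rightarrow> real \<Rightarrow> nat set" where
  "active N ts te t = {i. i < N \<and> ts i \<le> t \<and> t \<le> te i}"

definition agg :: "nat \<Rightarrow> (nat \<Rightarrow> real) \<Rightarrow> (nat \<Rightarrow> real) \<Rightarrow> (nat \<Rightarrow> real \<Rightarrow> real) \<Rightarrow> real \<Rightarrow> real" where
  "agg N ts te x t = (\<Sum>i\<in>active N ts te t. x i t)"

definition cost :: "real \<Rightarrow> real \<Rightarrow> real \<Rightarrow> nat \<Rightarrow> (nat \<Rightarrow> real) \<Rightarrow> (nat \<Rightarrow> real)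
    \<Rightarrow> (nat \<Rightarrow> real \<Rightarrow> real) \<Rightarrow> real" where
  "cost a b T N ts te x =
     (LINT t:{0..T}|lborel. a * agg N ts te x t + b * (agg N ts te x t)\<^sup>2)"

definition feasible :: "nat \<Rightarrow> (nat \<Rightarrow> real) \<Rightarrow> (nat \<Rightarrow> real) \<Rightarrow> (nat \<Rightarrow> real) \<Rightarrow> (nat \<Rightarrow> real)
    \<Rightarrow> (nat \<Rightarrow> real \<Rightarrow> real) \<Rightarrow> bool" where
  "feasible N ts te D U x \<longleftrightarrow>
     (\<forall>i<N. set_borel_measurable lborel {ts i..te i} (x i)
          \<and> (\<forall>t\<in>{ts i..te i}. 0 \<le> x i t \<and> x i t \<le> U i)
          \<and> (LINT t:{ts i..te i}|lborel. x i t) \<ge> D i)"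

definition optimal :: "real \<Rightarrow> real \<Rightarrow> real \<Rightarrow> nat \<Rightarrow> (nat \<Rightarrow> real) \<Rightarrow> (nat \<Rightarrow> real)
    \<Rightarrow> (nat \<Rightarrow> real) \<Rightarrow> (nat \<Rightarrow> real) \<Rightarrow> (nat \<Rightarrow> real \<Rightarrow> real) \<Rightarrow> bool" where
  "optimal a b T N ts te D U x \<longleftrightarrow>
     feasible N ts te D U x \<and>
     (\<forall>y. feasible N ts te D U y \<longrightarrow> cost a b T N ts te x \<le> cost a b T N ts te y)"

definition events :: "real \<Rightarrow> nat \<Rightarrow> (nat \<Rightarrow> real) \<Rightarrow> (nat \<Rightarrow> real) \<Rightarrow> real set" where
  "events T N ts te = {0, T} \<union> ts ` {..<N} \<union> te ` {..<N}"

definition consecutive :: "real set \<Rightarrow> real \<Rightarrow> real \<Rightarrow> bool" where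
  "consecutive E t1 t2 \<longleftrightarrow> t1 \<in> E \<and> t2 \<in> E \<and> t1 < t2 \<and> {t1<..<t2} \<inter> E = {}"

end

theory Submission
  imports Defs
begin

text \<open>Replace the rate of every job, on each gap between consecutive event instants, by its
  mean over that gap. Since arrivals and departures are event instants, the averaged schedule is
  again feasible (the rates stay in \<open>[0, U i]\<close> and each job receives the same energy), and its
  aggregate rate is the gap-wise mean of the original aggregate rate \<open>s\<close>. On a gap with mean
  \<open>m\<close>, integrating \<open>a s + b s\<^sup>2 = (a + 2 b m) s - b m\<^sup>2 + b (s - m)\<^sup>2\<close> shows that averaging
  lowers the cost by exactly \<open>b\<close> times the integral of \<open>(s - m)\<^sup>2\<close>. For an optimal schedule this
  loss must vanish, so \<open>s = m\<close> almost everywhere on the gap, and the averaged schedule is an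
  optimal one with rates constant on every gap.\<close>

lemma set_integrable_bounded:
  fixes f :: "real \<Rightarrow> real"
  assumes "f \<in> borel_measurable lborel" "A \<in> sets lborel" "bounded A" "\<And>t. \<bar>f t\<bar> \<le> B"
  shows "set_integrable lborel A f"
  unfolding set_integrable_def
  using integrableI_bounded_set_indicator[of A lborel f B] assms emeasure_bounded_finite[of A]
  by (auto simp: less_top)

lemma set_integral_sum:
  fixes f :: "'i \<Rightarrow> 'a \<Rightarrow> real"
  assumes "finite I" "\<And>i. i \<in> I \<Longrightarrow> set_integrable M A (f i)"
  shows "(LINT t:A|M. (\<Sum>i\<in>I. f i t)) = (\<Sum>i\<in>I. LINT t:A|M. f i t)"
  using assms unfolding set_lebesgue_integral_def set_integrable_def
  by (simp only: scaleR_sum_right) (rule Bochner_Integration.integral_sum, auto)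

lemma set_integral_Icc_eq_Ioo:
  fixes f :: "real \<Rightarrow> real"
  assumes "u \<le> v"
  shows "(LINT t:{u..v}|lborel. f t) = (LINT t:{u<..<v}|lborel. f t)"
  using interval_integral_Icc[OF assms, of f] interval_integral_Ioo[of "ereal u" "ereal v" f] assms
  by simp

lemma set_integral_Icc_split:
  fixes f :: "real \<Rightarrow> real"
  assumes "set_integrable lborel {u..v} f" "u \<le> w" "w \<le> v"
  shows "(LINT t:{u..v}|lborel. f t) = (LINT t:{u..w}|lborel. f t) + (LINT t:{w..v}|lborel. f t)"
proof -
  have "set_integrable lborel {u<..<v} f"
    by (rule set_integrable_subset[OF assms(1)]) auto
  then have "(LBINT t=ereal u..ereal w. f t) + (LBINT t=ereal w..ereal v. f t) = (LBINT t=ereal u..ereal v. f t)"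
    using assms(2,3) by (intro interval_integral_sum) (auto simp: interval_lebesgue_integrable_def min_def max_def)
  then show ?thesis
    using assms(2,3) by (simp add: interval_integral_Icc)
qed

lemma abs_quadratic_le:
  fixes a b s B :: real
  assumes "\<bar>s\<bar> \<le> B"
  shows "\<bar>a * s + b * s\<^sup>2\<bar> \<le> \<bar>a\<bar> * B + \<bar>b\<bar> * B\<^sup>2"
proof -
  have "s\<^sup>2 \<le> B\<^sup>2"
    using power_mono[OF assms, of 2] by simp
  then have "\<bar>a\<bar> * \<bar>s\<bar> + \<bar>b\<bar> * s\<^sup>2 \<le> \<bar>a\<bar> * B + \<bar>b\<bar> * B\<^sup>2"
    using assms by (intro add_mono mult_left_mono) auto
  moreover have "\<bar>a * s + b * s\<^sup>2\<bar> \<le> \<bar>a\<bar> * \<bar>s\<bar> + \<bar>b\<bar> * s\<^sup>2"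
    using abs_triangle_ineq[of "a * s" "b * s\<^sup>2"] by (simp add: abs_mult)
  ultimately show ?thesis by linarith
qed

lemma consecutive_Ioo_unique:
  assumes "consecutive E p q" "consecutive E p' q'" "t \<in> {p<..<q}" "t \<in> {p'<..<q'}"
  shows "p' = p \<and> q' = q"
proof -
  have "p' \<notin> {p<..<q}" "q' \<notin> {p<..<q}" "p \<notin> {p'<..<q'}" "q \<notin> {p'<..<q'}"
    using assms(1,2) unfolding consecutive_def by blast+
  then show ?thesis
    using assms(3,4) unfolding greaterThanLessThan_iff by linarith
qed

lemma consecutive_Ioo_subset_or_disjoint:
  assumes "consecutive E p q" "u \<in> E" "v \<in> E"
  shows "{p<..<q} \<subseteq> {u..v} \<or> {p<..<q} \<inter> {u..v} = {}"
proof (rule disjCI)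
  assume "{p<..<q} \<inter> {u..v} \<noteq> {}"
  then obtain t where "t \<in> {p<..<q}" "t \<in> {u..v}" by blast
  moreover have "u \<notin> {p<..<q}" "v \<notin> {p<..<q}"
    using assms unfolding consecutive_def by blast+
  ultimately show "{p<..<q} \<subseteq> {u..v}" by auto
qed

definition pieces :: "real set \<Rightarrow> real \<Rightarrow> real \<Rightarrow> (real \<times> real) set" where
  "pieces E u v = {(p, q). consecutive E p q \<and> u \<le> p \<and> q \<le> v}"

lemma finite_consecutive: "finite E \<Longrightarrow> finite {(p, q). consecutive E p q}"
  by (rule finite_subset[of _ "E \<times> E"]) (auto simp: consecutive_def)

lemma finite_pieces: "finite E \<Longrightarrow> finite (pieces E u v)"
  by (rule finite_subset[OF _ finite_consecutive]) (auto simp: pieces_def)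

lemma pieces_eq_empty: "v \<le> u \<Longrightarrow> pieces E u v = {}"
  by (auto simp: pieces_def consecutive_def)

lemma pieces_eq_singleton:
  assumes "u \<in> E" "v \<in> E" "u < v" "E \<inter> {u<..<v} = {}"
  shows "pieces E u v = {(u, v)}"
  using assms by (auto simp: pieces_def consecutive_def not_less dest!: le_neq_trans)

lemma pieces_split:
  assumes "w \<in> E" "u < w" "w < v"
  shows "pieces E u v = pieces E u w \<union> pieces E w v"
    and "pieces E u w \<inter> pieces E w v = {}"
  using assms by (auto simp: pieces_def consecutive_def)
    (metis IntI emptyE greaterThanLessThan_iff linorder_not_le)

lemma set_integral_Icc_eq_sum_pieces:
  fixes f :: "real \<Rightarrow> real"
  assumes "finite E" "set_integrable lborel {u..v} f" "u \<in> E" "v \<in> E" "u \<le> v"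
  shows "(LINT t:{u..v}|lborel. f t) = (\<Sum>(p, q)\<in>pieces E u v. LINT t:{p<..<q}|lborel. f t)"
  using assms(2-)
proof (induction "card (E \<inter> {u<..<v})" arbitrary: u v rule: less_induct)
  case less
  show ?case
  proof (cases "E \<inter> {u<..<v} = {}")
    case True
    then show ?thesis
      using less.prems set_integral_Icc_eq_Ioo[of u v f]
      by (cases "u = v") (simp_all add: pieces_eq_empty pieces_eq_singleton set_lebesgue_integral_def)
  next
    case False
    then obtain w where w: "w \<in> E" "u < w" "w < v" by auto
    have "card (E \<inter> {u<..<w}) < card (E \<inter> {u<..<v})" "card (E \<inter> {w<..<v}) < card (E \<inter> {u<..<v})"
      using w assms(1) by (auto intro!: psubset_card_mono)
    moreover have "set_integrable lborel {u..w} f" "set_integrable lborel {w..v} f"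
      using w by (auto intro: set_integrable_subset[OF less.prems(1)])
    ultimately have "(LINT t:{u..w}|lborel. f t) = (\<Sum>(p, q)\<in>pieces E u w. LINT t:{p<..<q}|lborel. f t)"
      and "(LINT t:{w..v}|lborel. f t) = (\<Sum>(p, q)\<in>pieces E w v. LINT t:{p<..<q}|lborel. f t)"
      using less.hyps less.prems w by auto
    then show ?thesis
      using set_integral_Icc_split[OF less.prems(1), of w] pieces_split[OF w] finite_pieces[OF assms(1)] w
      by (simp add: sum.union_disjoint)
  qed
qed

definition interval_mean :: "(real \<Rightarrow> real) \<Rightarrow> real \<Rightarrow> real \<Rightarrow> real" where
  "interval_mean f p q = (LINT t:{p<..<q}|lborel. f t) / (q - p)"

text \<open>Zero on \<open>E\<close> itself and outside the convex hull of \<open>E\<close>.\<close>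
definition piecewise_mean :: "real set \<Rightarrow> (real \<Rightarrow> real) \<Rightarrow> real \<Rightarrow> real" where
  "piecewise_mean E f t =
     (\<Sum>(p, q)\<in>{(p, q). consecutive E p q}. indicator {p<..<q} t * interval_mean f p q)"

lemma piecewise_mean_eq:
  assumes "finite E" "consecutive E p q" "t \<in> {p<..<q}"
  shows "piecewise_mean E f t = interval_mean f p q"
proof -
  let ?S = "{(p, q). consecutive E p q}"
  let ?g = "\<lambda>(p, q). indicator {p<..<q} t * interval_mean f p q"
  have "?g k = 0" if k_mem: "k \<in> ?S - {(p, q)}" for k
  proof -
    obtain p' q' where k: "k = (p', q')" "consecutive E p' q'" "(p', q') \<noteq> (p, q)"
      using k_mem by (cases k) auto
    then have "t \<notin> {p'<..<q'}"
      using consecutive_Ioo_unique[OF assms(2) k(2) assms(3)] by blast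
    then show ?thesis by (simp add: k(1))
  qed
  then have "piecewise_mean E f t = ?g (p, q)"
    unfolding piecewise_mean_def
    using sum.remove[OF finite_consecutive[OF assms(1)], of "(p, q)" ?g] assms(2) by simp
  then show ?thesis
    using assms(3) by simp
qed

lemma piecewise_mean_eq_0:
  assumes "\<And>p q. consecutive E p q \<Longrightarrow> t \<notin> {p<..<q}"
  shows "piecewise_mean E f t = 0"
  unfolding piecewise_mean_def using assms by (intro sum.neutral) auto

lemma borel_measurable_piecewise_mean [measurable]: "piecewise_mean E f \<in> borel_measurable lborel"
  unfolding piecewise_mean_def[abs_def] by (rule borel_measurable_sum) auto

lemma interval_mean_bounds:
  fixes f :: "real \<Rightarrow> real"
  assumes "p < q" "set_integrable lborel {p<..<q} f" "\<And>t. t \<in> {p<..<q} \<Longrightarrow> l \<le> f t \<and> f t \<le> h"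
  shows "l \<le> interval_mean f p q \<and> interval_mean f p q \<le> h"
proof -
  have const: "set_integrable lborel {p<..<q} (\<lambda>_. c)" for c :: real
    by (rule set_integrable_bounded[where B = "\<bar>c\<bar>"]) auto
  have "(LINT t:{p<..<q}|lborel. l) \<le> (LINT t:{p<..<q}|lborel. f t)"
    by (rule set_integral_mono[OF const assms(2)]) (use assms(3) in blast)
  moreover have "(LINT t:{p<..<q}|lborel. f t) \<le> (LINT t:{p<..<q}|lborel. h)"
    by (rule set_integral_mono[OF assms(2) const]) (use assms(3) in blast)
  moreover have "(LINT t:{p<..<q}|lborel. c) = c * (q - p)" for c :: real
    using set_integral_const[of "{p<..<q}" lborel c] assms(1) by simp
  ultimately show ?thesis
    using assms(1) by (simp add: interval_mean_def divide_simps mult.commute)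
qed

lemma piecewise_mean_bounds:
  fixes f :: "real \<Rightarrow> real"
  assumes "finite E" "f \<in> borel_measurable lborel" "\<And>t. l \<le> f t \<and> f t \<le> h" "l \<le> 0" "0 \<le> h"
  shows "l \<le> piecewise_mean E f t \<and> piecewise_mean E f t \<le> h"
proof (cases "\<exists>p q. consecutive E p q \<and> t \<in> {p<..<q}")
  case True
  then obtain p q where pq: "consecutive E p q" "t \<in> {p<..<q}" by blast
  have "\<bar>f t\<bar> \<le> \<bar>l\<bar> + \<bar>h\<bar>" for t
    using assms(3)[of t] by linarith
  then have "set_integrable lborel {p<..<q} f"
    using assms(2) by (intro set_integrable_bounded) auto
  then show ?thesis
    using pq assms(3) interval_mean_bounds[of p q f l h] piecewise_mean_eq[OF assms(1) pq]
    by (auto simp: consecutive_def)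
next
  case False
  then show ?thesis using piecewise_mean_eq_0[of E t f] assms(4,5) by auto
qed

lemma piecewise_mean_abs_le:
  fixes f :: "real \<Rightarrow> real"
  assumes "finite E" "f \<in> borel_measurable lborel" "\<And>t. \<bar>f t\<bar> \<le> B"
  shows "\<bar>piecewise_mean E f t\<bar> \<le> B"
proof -
  have "0 \<le> B" using assms(3)[of 0] by linarith
  moreover have "- B \<le> f t \<and> f t \<le> B" for t
    using assms(3)[of t] by linarith
  ultimately have "- B \<le> piecewise_mean E f t \<and> piecewise_mean E f t \<le> B"
    by (intro piecewise_mean_bounds[OF assms(1,2)]) auto
  then show ?thesis by linarith
qed

lemma set_integral_piecewise_mean:
  assumes "finite E" "consecutive E p q"
  shows "(LINT t:{p<..<q}|lborel. piecewise_mean E f t) = (LINT t:{p<..<q}|lborel. f t)"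
proof -
  have "p < q" using assms(2) by (simp add: consecutive_def)
  have "(LINT t:{p<..<q}|lborel. piecewise_mean E f t) = (LINT t:{p<..<q}|lborel. interval_mean f p q)"
    using piecewise_mean_eq[OF assms] by (intro set_lebesgue_integral_cong) auto
  also have "\<dots> = (q - p) * interval_mean f p q"
    using set_integral_const[of "{p<..<q}" lborel "interval_mean f p q"] \<open>p < q\<close> by simp
  finally show ?thesis
    using \<open>p < q\<close> by (simp add: interval_mean_def)
qed

lemma set_integral_Icc_piecewise_mean:
  fixes f :: "real \<Rightarrow> real"
  assumes "finite E" "u \<in> E" "v \<in> E" "u \<le> v" "f \<in> borel_measurable lborel" "\<And>t. \<bar>f t\<bar> \<le> B"
  shows "(LINT t:{u..v}|lborel. piecewise_mean E f t) = (LINT t:{u..v}|lborel. f t)"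
proof -
  have "set_integrable lborel {u..v} (piecewise_mean E f)"
    using piecewise_mean_abs_le[OF assms(1,5,6)] by (intro set_integrable_bounded) auto
  moreover have "set_integrable lborel {u..v} f"
    using assms(5,6) by (intro set_integrable_bounded) auto
  moreover have "(\<Sum>(p, q)\<in>pieces E u v. LINT t:{p<..<q}|lborel. piecewise_mean E f t) =
      (\<Sum>(p, q)\<in>pieces E u v. LINT t:{p<..<q}|lborel. f t)"
    by (intro sum.cong refl) (auto simp: pieces_def set_integral_piecewise_mean[OF assms(1)])
  ultimately show ?thesis
    by (simp add: set_integral_Icc_eq_sum_pieces[OF assms(1) _ assms(2-4)])
qed

lemma piecewise_mean_sum:
  fixes f :: "'i \<Rightarrow> real \<Rightarrow> real"
  assumes "finite E" "finite I" "\<And>i p q. i \<in> I \<Longrightarrow> set_integrable lborel {p<..<q} (f i)"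
  shows "piecewise_mean E (\<lambda>t. \<Sum>i\<in>I. f i t) t = (\<Sum>i\<in>I. piecewise_mean E (f i) t)"
proof (cases "\<exists>p q. consecutive E p q \<and> t \<in> {p<..<q}")
  case True
  then obtain p q where pq: "consecutive E p q" "t \<in> {p<..<q}" by blast
  then show ?thesis
    using set_integral_sum[OF assms(2,3)]
    by (simp add: piecewise_mean_eq[OF assms(1) pq] interval_mean_def sum_divide_distrib)
next
  case False
  then show ?thesis by (simp add: piecewise_mean_eq_0)
qed

lemma set_integral_quadratic_eq_mean:
  fixes f :: "real \<Rightarrow> real"
  assumes "p < q" "f \<in> borel_measurable lborel" "\<And>t. \<bar>f t\<bar> \<le> B"
  defines "m \<equiv> interval_mean f p q"
  shows "(LINT t:{p<..<q}|lborel. a * f t + b * (f t)\<^sup>2) =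
    (q - p) * (a * m + b * m\<^sup>2) + b * (LINT t:{p<..<q}|lborel. (f t - m)\<^sup>2)"
proof -
  have f_int: "set_integrable lborel {p<..<q} f"
    using assms(2,3) by (intro set_integrable_bounded) auto
  have "\<bar>(f t - m)\<^sup>2\<bar> \<le> (B + \<bar>m\<bar>)\<^sup>2" for t
    using power_mono[of "\<bar>f t - m\<bar>" "B + \<bar>m\<bar>" 2] assms(3)[of t] by simp
  then have sq_int: "set_integrable lborel {p<..<q} (\<lambda>t. (f t - m)\<^sup>2)"
    using assms(2) by (intro set_integrable_bounded) auto
  have const_int: "set_integrable lborel {p<..<q} (\<lambda>_. c)" for c :: real
    by (rule set_integrable_bounded[where B = "\<bar>c\<bar>"]) auto
  have "a * f t + b * (f t)\<^sup>2 = (a + 2 * b * m) * f t + (b * (f t - m)\<^sup>2 - b * m\<^sup>2)" for t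
    by (simp add: power2_eq_square algebra_simps)
  then have "(LINT t:{p<..<q}|lborel. a * f t + b * (f t)\<^sup>2) =
      (a + 2 * b * m) * (LINT t:{p<..<q}|lborel. f t) + b * (LINT t:{p<..<q}|lborel. (f t - m)\<^sup>2)
      - (LINT t:{p<..<q}|lborel. b * m\<^sup>2)"
    using f_int sq_int const_int by simp
  moreover have "(LINT t:{p<..<q}|lborel. f t) = (q - p) * m"
    using assms(1) by (simp add: m_def interval_mean_def)
  moreover have "(LINT t:{p<..<q}|lborel. b * m\<^sup>2) = (q - p) * (b * m\<^sup>2)"
    using set_integral_const[of "{p<..<q}" lborel "b * m\<^sup>2"] assms(1) by simp
  ultimately show ?thesis
    by (simp add: power2_eq_square algebra_simps)
qed

lemma set_integrable_quadratic:
  fixes f :: "real \<Rightarrow> real"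
  assumes "f \<in> borel_measurable lborel" "\<And>t. \<bar>f t\<bar> \<le> B" "A \<in> sets lborel" "bounded A"
  shows "set_integrable lborel A (\<lambda>t. a * f t + b * (f t)\<^sup>2)"
  using assms abs_quadratic_le[OF assms(2)] by (intro set_integrable_bounded) auto

lemma set_integral_quadratic_piecewise_mean:
  fixes f :: "real \<Rightarrow> real"
  assumes "finite E" "u \<in> E" "v \<in> E" "u \<le> v" "f \<in> borel_measurable lborel" "\<And>t. \<bar>f t\<bar> \<le> B"
  shows "(LINT t:{u..v}|lborel. a * f t + b * (f t)\<^sup>2) =
      (LINT t:{u..v}|lborel. a * piecewise_mean E f t + b * (piecewise_mean E f t)\<^sup>2)
      + b * (\<Sum>(p, q)\<in>pieces E u v. LINT t:{p<..<q}|lborel. (f t - interval_mean f p q)\<^sup>2)"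
proof -
  let ?m = "interval_mean f"
  have piece: "consecutive E p q \<Longrightarrow> p < q" for p q
    by (simp add: consecutive_def)
  have on_piece: "(LINT t:{p<..<q}|lborel. a * piecewise_mean E f t + b * (piecewise_mean E f t)\<^sup>2) =
      (q - p) * (a * ?m p q + b * (?m p q)\<^sup>2)" if "consecutive E p q" for p q
  proof -
    have "(LINT t:{p<..<q}|lborel. a * piecewise_mean E f t + b * (piecewise_mean E f t)\<^sup>2) =
        (LINT t:{p<..<q}|lborel. a * ?m p q + b * (?m p q)\<^sup>2)"
      using piecewise_mean_eq[OF assms(1) that] by (intro set_lebesgue_integral_cong) auto
    then show ?thesis
      using set_integral_const[of "{p<..<q}" lborel "a * ?m p q + b * (?m p q)\<^sup>2"] piece[OF that] by simp
  qed
  have "set_integrable lborel {u..v} (\<lambda>t. a * piecewise_mean E f t + b * (piecewise_mean E f t)\<^sup>2)"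
    by (rule set_integrable_quadratic[OF _ piecewise_mean_abs_le[OF assms(1,5,6)]]) auto
  then have mean_eq: "(LINT t:{u..v}|lborel. a * piecewise_mean E f t + b * (piecewise_mean E f t)\<^sup>2) =
      (\<Sum>(p, q)\<in>pieces E u v. (q - p) * (a * ?m p q + b * (?m p q)\<^sup>2))"
    using on_piece by (simp add: set_integral_Icc_eq_sum_pieces[OF assms(1) _ assms(2-4)])
      (auto intro!: sum.cong simp: pieces_def)
  have "set_integrable lborel {u..v} (\<lambda>t. a * f t + b * (f t)\<^sup>2)"
    by (rule set_integrable_quadratic[OF assms(5,6)]) auto
  then have "(LINT t:{u..v}|lborel. a * f t + b * (f t)\<^sup>2) =
      (\<Sum>(p, q)\<in>pieces E u v. (q - p) * (a * ?m p q + b * (?m p q)\<^sup>2)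
         + b * (LINT t:{p<..<q}|lborel. (f t - ?m p q)\<^sup>2))"
    using set_integral_quadratic_eq_mean[OF piece assms(5,6)]
    by (simp add: set_integral_Icc_eq_sum_pieces[OF assms(1) _ assms(2-4)])
      (auto intro!: sum.cong simp: pieces_def)
  then show ?thesis
    unfolding mean_eq by (simp add: sum.distrib sum_distrib_left case_prod_beta)
qed

lemma set_integral_square_nonneg: "0 \<le> (LINT t:A|M. (f t - c)\<^sup>2 :: real)"
  unfolding set_lebesgue_integral_def
  by (rule Bochner_Integration.integral_nonneg) (auto simp: indicator_def)

lemma AE_eq_if_set_integral_square_eq_0:
  fixes f :: "real \<Rightarrow> real"
  assumes "f \<in> borel_measurable lborel" "\<And>t. \<bar>f t\<bar> \<le> B"
    and "(LINT t:{p<..<q}|lborel. (f t - c)\<^sup>2) = 0"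
  shows "AE t in lborel. t \<in> {p<..<q} \<longrightarrow> f t = c"
proof -
  have "\<bar>(f t - c)\<^sup>2\<bar> \<le> (B + \<bar>c\<bar>)\<^sup>2" for t
    using power_mono[of "\<bar>f t - c\<bar>" "B + \<bar>c\<bar>" 2] assms(2)[of t] by simp
  then have "integrable lborel (\<lambda>t. indicator {p<..<q} t *\<^sub>R (f t - c)\<^sup>2)"
    using assms(1) set_integrable_bounded[of "\<lambda>t. (f t - c)\<^sup>2" "{p<..<q}"]
    unfolding set_integrable_def by auto
  from integral_nonneg_eq_0_iff_AE[OF this] assms(3)
  have "AE t in lborel. indicator {p<..<q} t *\<^sub>R (f t - c)\<^sup>2 = (0::real)"
    by (simp add: set_lebesgue_integral_def)
  then show ?thesis
    by (auto elim!: eventually_mono simp: indicator_def)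
qed

lemma agg_eq_sum_indicator:
  "agg N ts te z t = (\<Sum>i<N. indicator {ts i..te i} t * z i t)"
proof -
  have "active N ts te t = {i\<in>{..<N}. ts i \<le> t \<and> t \<le> te i}"
    by (auto simp: active_def)
  then show ?thesis
    unfolding agg_def by (simp add: sum.inter_filter indicator_def) (rule sum.cong; auto)
qed

lemma finite_events: "finite (events T N ts te)"
  by (simp add: events_def)

lemma arrival_departure_in_events: "i < N \<Longrightarrow> ts i \<in> events T N ts te \<and> te i \<in> events T N ts te"
  by (simp add: events_def)

lemma feasible_indicator_rate:
  assumes "feasible N ts te D U x" "i < N" "ts i \<le> te i"
  shows "(\<lambda>t. indicator {ts i..te i} t * x i t) \<in> borel_measurable lborel"
    and "0 \<le> indicator {ts i..te i} t * x i t \<and> indicator {ts i..te i} t * x i t \<le> U i"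
proof -
  have x_bounds: "0 \<le> x i t \<and> x i t \<le> U i" if "t \<in> {ts i..te i}" for t
    using assms(1,2) that by (auto simp: feasible_def)
  then have "0 \<le> U i"
    using assms(3) by force
  then show "0 \<le> indicator {ts i..te i} t * x i t \<and> indicator {ts i..te i} t * x i t \<le> U i"
    using x_bounds[of t] by (auto simp: indicator_def)
  show "(\<lambda>t. indicator {ts i..te i} t * x i t) \<in> borel_measurable lborel"
    using assms(1,2) by (auto simp: feasible_def set_borel_measurable_def)
qed

lemma feasible_agg_bounds:
  assumes "feasible N ts te D U x" "\<forall>i<N. ts i \<le> te i"
  shows "agg N ts te x \<in> borel_measurable lborel" and "\<bar>agg N ts te x t\<bar> \<le> (\<Sum>i<N. U i)"
proof -
  note rate = feasible_indicator_rate[OF assms(1) _ assms(2)[rule_format]]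
  show "agg N ts te x \<in> borel_measurable lborel"
    unfolding agg_eq_sum_indicator[abs_def] using rate(1) by measurable
  have "\<bar>agg N ts te x t\<bar> \<le> (\<Sum>i<N. \<bar>indicator {ts i..te i} t * x i t\<bar>)"
    unfolding agg_eq_sum_indicator by (rule sum_abs)
  also have "\<dots> \<le> (\<Sum>i<N. U i)"
    using rate(2) by (intro sum_mono) force
  finally show "\<bar>agg N ts te x t\<bar> \<le> (\<Sum>i<N. U i)" .
qed

definition averaged_schedule ::
    "real \<Rightarrow> nat \<Rightarrow> (nat \<Rightarrow> real) \<Rightarrow> (nat \<Rightarrow> real) \<Rightarrow> (nat \<Rightarrow> real \<Rightarrow> real) \<Rightarrow> nat \<Rightarrow> real \<Rightarrow> real" where
  "averaged_schedule T N ts te x i =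
     piecewise_mean (events T N ts te) (\<lambda>t. indicator {ts i..te i} t * x i t)"

lemma feasible_averaged_schedule:
  assumes "feasible N ts te D U x" "\<forall>i<N. ts i \<le> te i"
  shows "feasible N ts te D U (averaged_schedule T N ts te x)"
  unfolding feasible_def
proof (intro allI impI conjI ballI)
  fix i t assume i: "i < N"
  note rate = feasible_indicator_rate[OF assms(1) i assms(2)[rule_format, OF i]]
  show "set_borel_measurable lborel {ts i..te i} (averaged_schedule T N ts te x i)"
    unfolding set_borel_measurable_def averaged_schedule_def by measurable
  have "0 \<le> averaged_schedule T N ts te x i t \<and> averaged_schedule T N ts te x i t \<le> U i"
    unfolding averaged_schedule_def
    by (rule piecewise_mean_bounds[OF finite_events rate(1) rate(2)]) (use rate(2)[of t] in auto)
  then show "0 \<le> averaged_schedule T N ts te x i t" "averaged_schedule T N ts te x i t \<le> U i"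
    by auto
next
  fix i assume i: "i < N"
  note rate = feasible_indicator_rate[OF assms(1) i assms(2)[rule_format, OF i]]
  have "\<bar>indicator {ts i..te i} t * x i t\<bar> \<le> U i" for t
    using rate(2)[of t] by linarith
  then have "(LINT t:{ts i..te i}|lborel. averaged_schedule T N ts te x i t) =
      (LINT t:{ts i..te i}|lborel. indicator {ts i..te i} t * x i t)"
    unfolding averaged_schedule_def
    using arrival_departure_in_events[OF i] assms(2) i
    by (intro set_integral_Icc_piecewise_mean[OF finite_events _ _ _ rate(1)]) auto
  also have "\<dots> = (LINT t:{ts i..te i}|lborel. x i t)"
    by (rule set_lebesgue_integral_cong) auto
  finally show "D i \<le> (LINT t:{ts i..te i}|lborel. averaged_schedule T N ts te x i t)"
    using assms(1) i by (simp add: feasible_def)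
qed

lemma agg_averaged_schedule:
  assumes "feasible N ts te D U x" "\<forall>i<N. ts i \<le> te i"
  shows "agg N ts te (averaged_schedule T N ts te x) = piecewise_mean (events T N ts te) (agg N ts te x)"
proof
  fix t
  define E where "E = events T N ts te"
  define r where "r i = (\<lambda>t. indicator {ts i..te i} t * x i t)" for i
  have rate: "r i \<in> borel_measurable lborel" "0 \<le> r i t \<and> r i t \<le> U i" if "i < N" for i t
    using feasible_indicator_rate[OF assms(1) that assms(2)[rule_format, OF that]] by (simp_all add: r_def)
  have r_int: "set_integrable lborel {p<..<q} (r i)" if "i < N" for i p q
    using rate[OF that] by (intro set_integrable_bounded[where B = "U i"]) (auto simp: abs_le_iff)
  have job: "indicator {ts i..te i} t * piecewise_mean E (r i) t = piecewise_mean E (r i) t" if i: "i < N" for i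
  proof (cases "t \<in> {ts i..te i} \<or> (\<forall>p q. consecutive E p q \<longrightarrow> t \<notin> {p<..<q})")
    case True
    then show ?thesis by (auto simp: piecewise_mean_eq_0)
  next
    case False
    then obtain p q where pq: "consecutive E p q" "t \<in> {p<..<q}" and t: "t \<notin> {ts i..te i}"
      by blast
    \<comment> \<open>The gap around \<open>t\<close> misses the whole window of job \<open>i\<close>, so the mean there is \<open>0\<close>.\<close>
    have "ts i \<in> E" "te i \<in> E"
      using arrival_departure_in_events[OF i] by (auto simp: E_def)
    then have "{p<..<q} \<inter> {ts i..te i} = {}"
      using consecutive_Ioo_subset_or_disjoint[OF pq(1)] pq(2) t by blast
    then have "(LINT s:{p<..<q}|lborel. r i s) = (LINT s:{p<..<q}|lborel. 0)"
      by (intro set_lebesgue_integral_cong) (auto simp: r_def indicator_def)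
    then show ?thesis
      using t by (simp add: piecewise_mean_eq[OF finite_events pq[unfolded E_def], folded E_def]
          interval_mean_def set_lebesgue_integral_def)
  qed
  have "agg N ts te (averaged_schedule T N ts te x) t = (\<Sum>i<N. indicator {ts i..te i} t * piecewise_mean E (r i) t)"
    by (simp add: agg_eq_sum_indicator averaged_schedule_def E_def r_def)
  also have "\<dots> = (\<Sum>i<N. piecewise_mean E (r i) t)"
    using job by (intro sum.cong) auto
  also have "\<dots> = piecewise_mean E (\<lambda>t. \<Sum>i<N. r i t) t"
    by (rule piecewise_mean_sum[symmetric]) (use r_int in \<open>auto simp: E_def finite_events\<close>)
  also have "(\<lambda>t. \<Sum>i<N. r i t) = agg N ts te x"
    by (simp add: agg_eq_sum_indicator r_def fun_eq_iff)
  finally show "agg N ts te (averaged_schedule T N ts te x) t = piecewise_mean E (agg N ts te x) t" .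
qed

lemma cost_eq_cost_averaged_schedule:
  assumes "feasible N ts te D U x" "\<forall>i<N. ts i \<le> te i" "0 \<le> T"
  shows "cost a b T N ts te x = cost a b T N ts te (averaged_schedule T N ts te x)
    + b * (\<Sum>(p, q)\<in>pieces (events T N ts te) 0 T.
             LINT t:{p<..<q}|lborel. (agg N ts te x t - interval_mean (agg N ts te x) p q)\<^sup>2)"
  unfolding cost_def agg_averaged_schedule[OF assms(1,2)]
  by (rule set_integral_quadratic_piecewise_mean[OF finite_events _ _ assms(3) feasible_agg_bounds[OF assms(1,2)]])
    (auto simp: events_def)

lemma optimal_averaged_schedule:
  assumes "optimal a b T N ts te D U x" "0 < b" "\<forall>i<N. ts i \<le> te i" "0 \<le> T"
  defines "var p q \<equiv> LINT t:{p<..<q}|lborel. (agg N ts te x t - interval_mean (agg N ts te x) p q)\<^sup>2"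
  shows "optimal a b T N ts te D U (averaged_schedule T N ts te x)"
    and "\<And>p q. (p, q) \<in> pieces (events T N ts te) 0 T \<Longrightarrow> var p q = 0"
proof -
  define P where "P = pieces (events T N ts te) 0 T"
  have x_feasible: "feasible N ts te D U x"
    and x_min: "\<And>z. feasible N ts te D U z \<Longrightarrow> cost a b T N ts te x \<le> cost a b T N ts te z"
    using assms(1) by (auto simp: optimal_def)
  have y_feasible: "feasible N ts te D U (averaged_schedule T N ts te x)"
    by (rule feasible_averaged_schedule[OF x_feasible assms(3)])
  have cost_x: "cost a b T N ts te x =
      cost a b T N ts te (averaged_schedule T N ts te x) + b * (\<Sum>(p, q)\<in>P. var p q)"
    unfolding P_def var_def by (rule cost_eq_cost_averaged_schedule[OF x_feasible assms(3,4)])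
  have var_nonneg: "0 \<le> var p q" for p q
    unfolding var_def by (rule set_integral_square_nonneg)
  then have "0 \<le> (\<Sum>(p, q)\<in>P. var p q)"
    by (simp add: sum_nonneg case_prod_beta)
  moreover have "b * (\<Sum>(p, q)\<in>P. var p q) \<le> 0"
    using cost_x x_min[OF y_feasible] by linarith
  ultimately have var_sum: "(\<Sum>(p, q)\<in>P. var p q) = 0"
    using assms(2) by (simp add: mult_le_0_iff)
  then show "optimal a b T N ts te D U (averaged_schedule T N ts te x)"
    using y_feasible x_min cost_x by (auto simp: optimal_def)
  have "finite P"
    unfolding P_def by (rule finite_pieces[OF finite_events])
  then have "\<forall>k\<in>P. case k of (p, q) \<Rightarrow> var p q = 0"
    using sum_nonneg_eq_0_iff[of P "\<lambda>(p, q). var p q"] var_nonneg var_sum by (simp add: case_prod_beta)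
  then show "(p, q) \<in> pieces (events T N ts te) 0 T \<Longrightarrow> var p q = 0" for p q
    by (fastforce simp: P_def)
qed

theorem lemma1:
  fixes a b T :: real and N :: nat and ts te D U :: "nat \<Rightarrow> real"
    and x :: "nat \<Rightarrow> real \<Rightarrow> real"
  assumes "a \<ge> 0" and "b > 0"
    and "\<forall>i<N. 0 \<le> ts i \<and> ts i < te i \<and> te i \<le> T"
    and "optimal a b T N ts te D U x"
  shows "(\<forall>t1 t2. consecutive (events T N ts te) t1 t2 \<longrightarrow>
            (\<exists>c. AE t in lborel. t \<in> {t1<..<t2} \<longrightarrow> agg N ts te x t = c))
       \<and> (\<exists>y. optimal a b T N ts te D U y \<and>
            (\<forall>t1 t2. consecutive (events T N ts te) t1 t2 \<longrightarrow>
               (\<forall>i<N. \<exists>c. \<forall>t\<in>{t1<..<t2}. y i t = c)))"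
proof (cases "N = 0")
  case True
  then show ?thesis
    using assms(4) by (auto simp: agg_def active_def)
next
  case False
  define E where "E = events T N ts te"
  have windows: "\<forall>i<N. ts i \<le> te i"
    using assms(3) by auto
  have "0 \<le> T"
    using assms(3) False by force
  then have pieces_all: "consecutive E p q \<Longrightarrow> (p, q) \<in> pieces E 0 T" for p q
    using assms(3) by (auto simp: pieces_def consecutive_def E_def events_def)
  note averaged = optimal_averaged_schedule[OF assms(4,2) windows \<open>0 \<le> T\<close>, folded E_def]
  have "feasible N ts te D U x"
    using assms(4) by (simp add: optimal_def)
  note agg_bounds = feasible_agg_bounds[OF this windows]
  have "\<exists>c. AE t in lborel. t \<in> {p<..<q} \<longrightarrow> agg N ts te x t = c" if "consecutive E p q" for p q
    using AE_eq_if_set_integral_square_eq_0[OF agg_bounds averaged(2)[OF pieces_all[OF that]]] by blast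
  moreover have "averaged_schedule T N ts te x i t = interval_mean (\<lambda>t. indicator {ts i..te i} t * x i t) p q"
    if "consecutive E p q" "t \<in> {p<..<q}" for i p q t
    unfolding averaged_schedule_def using piecewise_mean_eq[OF finite_events that[unfolded E_def]] .
  ultimately show ?thesis
    using averaged(1) unfolding E_def by blast
qed

end
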